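(* Let $c$ and $\gamma$ be constants, $\mathcal{Y}$ a tiny class, and $t:\mathbb{N}\to\mathbb{R}$ an increasing unbounded function with $t(n)\le n$ for all $n$. Let $L\subseteq\mathbb{N}$ be an infinite $t$-sparse set, and for every $\ell\in L$ let $\mathcal{M}_\ell$ be a set of $\ell$-vertex monotone $(c,\mathcal{Y},t)$-tiny graphs with $|\mathcal{M}_\ell|\le\gamma^{t(\ell)}$. Then $\mathrm{Mon}\big(\bigcup_{\ell\in L}\mathcal{M}_\ell\big)$ is a monotone tiny class.
   Context: A class (set of graphs closed under isomorphism) is monotone if closed under subgraphs; it is tiny if hereditary (closed under induced subgraphs) and for some constant $\beta$ it contains at most $\beta^n$ unlabeled $n$-vertex graphs for every $n$. $\mathrm{Mon}(\mathcal{C})$ is the smallest monotone class containing $\mathcal{C}$. $L$ is $t$-sparse if there is no pair $x\ne y$ in $L$ with $t(y)\le x\le y$. For a graph $G$, $s_k(G)$ is the number of unlabeled $k$-vertex subgraphs of $G$. An $n$-vertex graph $G$ is monotone $(c,\mathcal{Y},t)$-tiny if (1) for every integer $1\le k\le t(n)$, every $k$-vertex subgraph of $G$ belongs to $\mathcal{Y}$, and (2) for every integer $t(n)<k\le n$, $s_k(G)\le c^k$. *)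

theory Defs
  imports Complex_Main
begin

text \<open>Finite simple graphs: a pair (V, E) of a finite vertex set V of naturals and
a set E of 2-element subsets of V.\<close>
type_synonym graph = "nat set \<times> nat set set"

definition wf_graph :: "graph \<Rightarrow> bool" where
  "wf_graph G \<longleftrightarrow> finite (fst G) \<and>
     snd G \<subseteq> {e. \<exists>x y. x \<noteq> y \<and> x \<in> fst G \<and> y \<in> fst G \<and> e = {x, y}}"

definition nverts :: "graph \<Rightarrow> nat" where
  "nverts G = card (fst G)"

definition graph_iso :: "graph \<Rightarrow> graph \<Rightarrow> bool" where
  "graph_iso G H \<longleftrightarrow> (\<exists>f. bij_betw f (fst G) (fst H) \<and>
     (\<forall>x\<in>fst G. \<forall>y\<in>fst G. {x, y} \<in> snd G \<longleftrightarrow> {f x, f y} \<in> snd H))"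

definition subgraph :: "graph \<Rightarrow> graph \<Rightarrow> bool" where
  "subgraph H G \<longleftrightarrow> wf_graph H \<and> fst H \<subseteq> fst G \<and> snd H \<subseteq> snd G"

definition induced_subgraph :: "graph \<Rightarrow> graph \<Rightarrow> bool" where
  "induced_subgraph H G \<longleftrightarrow> wf_graph H \<and> fst H \<subseteq> fst G \<and>
     snd H = {e \<in> snd G. e \<subseteq> fst H}"

definition is_class :: "graph set \<Rightarrow> bool" where
  "is_class C \<longleftrightarrow> (\<forall>G\<in>C. wf_graph G) \<and>
     (\<forall>G\<in>C. \<forall>H. wf_graph H \<and> graph_iso G H \<longrightarrow> H \<in> C)"

definition monotone_class :: "graph set \<Rightarrow> bool" where
  "monotone_class C \<longleftrightarrow> is_class C \<and> (\<forall>G\<in>C. \<forall>H. subgraph H G \<longrightarrow> H \<in> C)"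

definition hereditary_class :: "graph set \<Rightarrow> bool" where
  "hereditary_class C \<longleftrightarrow> is_class C \<and> (\<forall>G\<in>C. \<forall>H. induced_subgraph H G \<longrightarrow> H \<in> C)"

definition iso_class :: "graph \<Rightarrow> graph set" where
  "iso_class G = {H. wf_graph H \<and> graph_iso G H}"

definition unlabeled_count :: "graph set \<Rightarrow> nat \<Rightarrow> nat" where
  "unlabeled_count C n = card (iso_class ` {G \<in> C. nverts G = n})"

definition tiny_class :: "graph set \<Rightarrow> bool" where
  "tiny_class C \<longleftrightarrow> hereditary_class C \<and>
     (\<exists>\<beta>::real. \<forall>n. real (unlabeled_count C n) \<le> \<beta> ^ n)"

definition Mon :: "graph set \<Rightarrow> graph set" where
  "Mon C = \<Inter> {D. monotone_class D \<and> C \<subseteq> D}"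

definition t_sparse :: "(nat \<Rightarrow> real) \<Rightarrow> nat set \<Rightarrow> bool" where
  "t_sparse t L \<longleftrightarrow> \<not> (\<exists>x\<in>L. \<exists>y\<in>L. x \<noteq> y \<and> t y \<le> real x \<and> x \<le> y)"

definition s_sub :: "nat \<Rightarrow> graph \<Rightarrow> nat" where
  "s_sub k G = card (iso_class ` {H. subgraph H G \<and> nverts H = k})"

definition mono_tiny_graph :: "real \<Rightarrow> graph set \<Rightarrow> (nat \<Rightarrow> real) \<Rightarrow> graph \<Rightarrow> bool" where
  "mono_tiny_graph c Y t G \<longleftrightarrow>
     (\<forall>k::nat. 1 \<le> k \<and> real k \<le> t (nverts G) \<longrightarrow>
        (\<forall>H. subgraph H G \<and> nverts H = k \<longrightarrow> H \<in> Y)) \<and>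
     (\<forall>k::nat. t (nverts G) < real k \<and> k \<le> nverts G \<longrightarrow> real (s_sub k G) \<le> c ^ k)"

end

theory Submission
  imports Defs
begin

text \<open>By closure under isomorphism and subgraphs, Mon(C) consists of the graphs isomorphic to a
subgraph H of some G \<in> M_l. If H has n \<le> t(l) vertices then H \<in> Y; otherwise t(l) < n \<le> l,
and t-sparseness leaves at most one such l for each n. So the n-vertex graphs of Mon(C) fall into
at most \<beta>^n + |M_l| c^n isomorphism classes, and |M_l| \<le> \<gamma>^{t(l)} is exponential in n
because t(l) < n.\<close>

definition relabel :: "(nat \<Rightarrow> nat) \<Rightarrow> graph \<Rightarrow> graph" where
  "relabel g G = (g ` fst G, (`) g ` snd G)"

lemma wf_graph_edge_subset: "wf_graph G \<Longrightarrow> e \<in> snd G \<Longrightarrow> e \<subseteq> fst G"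
  unfolding wf_graph_def by blast

lemma wf_graph_relabel:
  assumes "wf_graph G" "inj_on g (fst G)"
  shows "wf_graph (relabel g G)"
  unfolding wf_graph_def
proof (intro conjI subsetI)
  show "finite (fst (relabel g G))"
    using assms(1) by (simp add: wf_graph_def relabel_def)
  fix e' assume "e' \<in> snd (relabel g G)"
  then obtain x y where "x \<noteq> y" "x \<in> fst G" "y \<in> fst G" "e' = {g x, g y}"
    using assms(1) unfolding relabel_def wf_graph_def by auto
  with assms(2) show "e' \<in> {e. \<exists>x y. x \<noteq> y \<and> x \<in> fst (relabel g G) \<and> y \<in> fst (relabel g G) \<and> e = {x, y}}"
    by (auto simp: relabel_def inj_on_def)
qed

lemma graph_iso_relabel:
  assumes "wf_graph G" "inj_on g (fst G)"
  shows "graph_iso G (relabel g G)"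
  unfolding graph_iso_def
proof (intro exI conjI ballI)
  show "bij_betw g (fst G) (fst (relabel g G))"
    using assms(2) by (simp add: relabel_def bij_betw_def)
  fix x y assume "x \<in> fst G" "y \<in> fst G"
  then have "{x, y} \<in> snd G \<longleftrightarrow> g ` {x, y} \<in> (`) g ` snd G"
    using inj_on_image_eq_iff[OF assms(2)] wf_graph_edge_subset[OF assms(1)]
    by (smt (verit) empty_subsetI image_iff insert_subset)
  then show "{x, y} \<in> snd G \<longleftrightarrow> {g x, g y} \<in> snd (relabel g G)"
    by (simp add: relabel_def)
qed

lemma graph_iso_refl: "graph_iso G G"
  unfolding graph_iso_def by (rule exI[of _ id]) auto

lemma graph_iso_sym:
  assumes "graph_iso G H"
  shows "graph_iso H G"
proof -
  obtain f where f: "bij_betw f (fst G) (fst H)"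
    and edges: "\<forall>x\<in>fst G. \<forall>y\<in>fst G. {x, y} \<in> snd G \<longleftrightarrow> {f x, f y} \<in> snd H"
    using assms unfolding graph_iso_def by blast
  let ?g = "inv_into (fst G) f"
  have g: "bij_betw ?g (fst H) (fst G)"
    using f by (rule bij_betw_inv_into)
  have "{x, y} \<in> snd H \<longleftrightarrow> {?g x, ?g y} \<in> snd G" if "x \<in> fst H" "y \<in> fst H" for x y
    using edges bij_betwE[OF g] that bij_betw_inv_into_right[OF f] by metis
  with g show ?thesis
    unfolding graph_iso_def by blast
qed

lemma graph_iso_trans:
  assumes "graph_iso G H" "graph_iso H K"
  shows "graph_iso G K"
proof -
  obtain f where f: "bij_betw f (fst G) (fst H)"
    and f_edges: "\<forall>x\<in>fst G. \<forall>y\<in>fst G. {x, y} \<in> snd G \<longleftrightarrow> {f x, f y} \<in> snd H"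
    using assms(1) unfolding graph_iso_def by blast
  obtain g where g: "bij_betw g (fst H) (fst K)"
    and g_edges: "\<forall>x\<in>fst H. \<forall>y\<in>fst H. {x, y} \<in> snd H \<longleftrightarrow> {g x, g y} \<in> snd K"
    using assms(2) unfolding graph_iso_def by blast
  have "{x, y} \<in> snd G \<longleftrightarrow> {(g \<circ> f) x, (g \<circ> f) y} \<in> snd K" if "x \<in> fst G" "y \<in> fst G" for x y
    using f_edges g_edges bij_betwE[OF f] that by simp
  with bij_betw_trans[OF f g] show ?thesis
    unfolding graph_iso_def by blast
qed

lemma iso_class_eq: "graph_iso G H \<Longrightarrow> iso_class G = iso_class H"
  unfolding iso_class_def using graph_iso_sym graph_iso_trans by blast

lemma nverts_graph_iso: "graph_iso G H \<Longrightarrow> nverts G = nverts H"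
  unfolding graph_iso_def nverts_def using bij_betw_same_card by blast

lemma nverts_subgraph_le: "subgraph H G \<Longrightarrow> wf_graph G \<Longrightarrow> nverts H \<le> nverts G"
  unfolding subgraph_def wf_graph_def nverts_def by (blast intro: card_mono)

lemma subgraph_trans: "subgraph A B \<Longrightarrow> subgraph B C \<Longrightarrow> subgraph A C"
  unfolding subgraph_def by auto

lemma subgraph_refl: "wf_graph G \<Longrightarrow> subgraph G G"
  unfolding subgraph_def by auto

lemma induced_subgraph_imp_subgraph: "induced_subgraph H G \<Longrightarrow> subgraph H G"
  unfolding induced_subgraph_def subgraph_def by auto

lemma subgraph_graph_iso_transfer:
  assumes "graph_iso G H" "subgraph G' G"
  shows "\<exists>H'. subgraph H' H \<and> graph_iso G' H'"
proof -
  obtain f where f: "bij_betw f (fst G) (fst H)"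
    and edges: "\<forall>x\<in>fst G. \<forall>y\<in>fst G. {x, y} \<in> snd G \<longleftrightarrow> {f x, f y} \<in> snd H"
    using assms(1) unfolding graph_iso_def by blast
  have wf: "wf_graph G'" and sub: "fst G' \<subseteq> fst G" "snd G' \<subseteq> snd G"
    using assms(2) unfolding subgraph_def by auto
  have inj: "inj_on f (fst G')"
    using f sub(1) by (auto simp: bij_betw_def intro: inj_on_subset)
  have "snd (relabel f G') \<subseteq> snd H"
  proof
    fix e' assume "e' \<in> snd (relabel f G')"
    then obtain x y where "x \<in> fst G'" "y \<in> fst G'" "{x, y} \<in> snd G'" "e' = {f x, f y}"
      using wf unfolding relabel_def wf_graph_def by auto
    then show "e' \<in> snd H"
      using edges sub by blast
  qed
  moreover have "fst (relabel f G') \<subseteq> fst H"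
    using f sub(1) by (auto simp: relabel_def bij_betw_def)
  ultimately have "subgraph (relabel f G') H"
    using wf_graph_relabel[OF wf inj] unfolding subgraph_def by blast
  with graph_iso_relabel[OF wf inj] show ?thesis
    by blast
qed

lemma finite_iso_classes_nverts: "finite (iso_class ` {G. wf_graph G \<and> nverts G = n})"
proof -
  let ?S = "{{0..<n}} \<times> Pow (Pow {0..<n})"
  have "iso_class G \<in> iso_class ` ?S" if "wf_graph G" "nverts G = n" for G
  proof -
    have "finite (fst G)" "card (fst G) = n"
      using that unfolding wf_graph_def nverts_def by simp_all
    then obtain h where h: "bij_betw h (fst G) {0..<n}"
      by (metis ex_bij_betw_finite_nat)
    then have inj: "inj_on h (fst G)" and vertices: "fst (relabel h G) = {0..<n}"
      by (simp_all add: relabel_def bij_betw_def)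
    have "snd (relabel h G) \<subseteq> Pow {0..<n}"
      using wf_graph_edge_subset[OF wf_graph_relabel[OF that(1) inj]] vertices by blast
    with vertices have "relabel h G \<in> ?S"
      by (simp add: mem_Times_iff)
    with iso_class_eq[OF graph_iso_relabel[OF that(1) inj]] show ?thesis
      by (rule image_eqI)
  qed
  then have "iso_class ` {G. wf_graph G \<and> nverts G = n} \<subseteq> iso_class ` ?S"
    by blast
  then show ?thesis
    by (rule finite_subset) simp
qed

definition subgraph_closure :: "graph set \<Rightarrow> graph set" where
  "subgraph_closure C = {G. wf_graph G \<and> (\<exists>G0\<in>C. \<exists>H. subgraph H G0 \<and> graph_iso H G)}"

lemma monotone_class_subgraph_closure: "monotone_class (subgraph_closure C)"
  unfolding monotone_class_def
proof
  show "is_class (subgraph_closure C)"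
    unfolding is_class_def subgraph_closure_def using graph_iso_trans by blast
  show "\<forall>G\<in>subgraph_closure C. \<forall>H. subgraph H G \<longrightarrow> H \<in> subgraph_closure C"
  proof (intro ballI allI impI)
    fix G H assume "G \<in> subgraph_closure C" and H: "subgraph H G"
    then obtain G0 K where "G0 \<in> C" "subgraph K G0" "graph_iso K G"
      unfolding subgraph_closure_def by blast
    moreover obtain H' where "subgraph H' K" "graph_iso H H'"
      using subgraph_graph_iso_transfer[OF graph_iso_sym[OF \<open>graph_iso K G\<close>] H] by blast
    moreover have "wf_graph H"
      using H unfolding subgraph_def by blast
    ultimately show "H \<in> subgraph_closure C"
      unfolding subgraph_closure_def by (blast intro: subgraph_trans graph_iso_sym)
  qed
qed

lemma Mon_eq_subgraph_closure:
  assumes "\<forall>G\<in>C. wf_graph G"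
  shows "Mon C = subgraph_closure C"
proof
  have "C \<subseteq> subgraph_closure C"
    using assms subgraph_refl graph_iso_refl unfolding subgraph_closure_def by blast
  then show "Mon C \<subseteq> subgraph_closure C"
    unfolding Mon_def using monotone_class_subgraph_closure by blast
  have "subgraph_closure C \<subseteq> D" if "monotone_class D" "C \<subseteq> D" for D
    using that unfolding subgraph_closure_def monotone_class_def is_class_def by blast
  then show "subgraph_closure C \<subseteq> Mon C"
    unfolding Mon_def by blast
qed

lemma monotone_class_imp_hereditary_class: "monotone_class C \<Longrightarrow> hereditary_class C"
  unfolding monotone_class_def hereditary_class_def using induced_subgraph_imp_subgraph by blast

lemma mono_tiny_graph_subgraph_cases:
  assumes "mono_tiny_graph c Y t G" "wf_graph G" "subgraph H G" "1 \<le> nverts H"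
  shows "H \<in> Y \<or> t (nverts G) < real (nverts H) \<and> nverts H \<le> nverts G"
proof (cases "real (nverts H) \<le> t (nverts G)")
  case True
  then show ?thesis
    using assms(1,3,4) unfolding mono_tiny_graph_def by blast
next
  case False
  then show ?thesis
    using nverts_subgraph_le[OF assms(3,2)] by simp
qed

lemma t_sparse_window_subset_singleton:
  assumes "t_sparse t L"
  shows "\<exists>l. {l \<in> L. t l < real n \<and> n \<le> l} \<subseteq> {l}"
proof -
  have eq: "l = l'" if "l \<in> L" "l' \<in> L" "l \<le> l'" "t l' < real n" "n \<le> l" for l l'
  proof -
    have "t l' \<le> real l"
      using that(4,5) by linarith
    then show ?thesis
      using assms that(1-3) unfolding t_sparse_def by blast
  qed
  have "l = l'" if "l \<in> {l \<in> L. t l < real n \<and> n \<le> l}" "l' \<in> {l \<in> L. t l < real n \<and> n \<le> l}" for l l'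
    using that eq[of l l'] eq[of l' l] nat_le_linear[of l l'] by auto
  then show ?thesis
    by blast
qed

lemma unlabeled_count_zero_le_one:
  assumes "\<forall>G\<in>A. wf_graph G"
  shows "unlabeled_count A 0 \<le> 1"
proof -
  have "{G \<in> A. nverts G = 0} \<subseteq> {({}, {})}"
    using assms unfolding wf_graph_def nverts_def by fastforce
  then have "iso_class ` {G \<in> A. nverts G = 0} \<subseteq> {iso_class ({}, {})}"
    by blast
  then show ?thesis
    unfolding unlabeled_count_def using card_mono[of "{iso_class ({}, {})}"] by fastforce
qed

lemma unlabeled_count_Mon_le:
  assumes "1 \<le> n" and Y: "\<forall>G\<in>Y. wf_graph G" and "t_sparse t L"
    and M: "\<forall>l\<in>L. \<forall>G\<in>M l. wf_graph G \<and> nverts G = l \<and> mono_tiny_graph c Y t G"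
    and M_finite: "\<forall>l\<in>L. finite (M l)"
  shows "unlabeled_count (Mon (\<Union>l\<in>L. M l)) n
    \<le> unlabeled_count Y n + (\<Sum>l\<in>{l \<in> L. t l < real n \<and> n \<le> l}. \<Sum>G\<in>M l. s_sub n G)"
proof -
  define W where "W = {l \<in> L. t l < real n \<and> n \<le> l}"
  define S where "S G = iso_class ` {H. subgraph H G \<and> nverts H = n}" for G
  define R where "R = iso_class ` {G \<in> Y. nverts G = n} \<union> (\<Union>l\<in>W. \<Union>G\<in>M l. S G)"
  have Mon_eq: "Mon (\<Union>l\<in>L. M l) = subgraph_closure (\<Union>l\<in>L. M l)"
    using M by (intro Mon_eq_subgraph_closure) blast
  have "iso_class G \<in> R" if G: "G \<in> Mon (\<Union>l\<in>L. M l)" "nverts G = n" for G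
  proof -
    obtain l G0 H where l: "l \<in> L" "G0 \<in> M l" and H: "subgraph H G0" "graph_iso H G"
      using G(1) unfolding Mon_eq subgraph_closure_def by blast
    have "nverts H = n" "iso_class G = iso_class H"
      using H(2) G(2) nverts_graph_iso iso_class_eq by metis+
    moreover have "H \<in> Y \<or> t l < real n \<and> n \<le> l"
      using mono_tiny_graph_subgraph_cases[of c Y t G0 H] M l H(1) \<open>nverts H = n\<close> assms(1)
      by auto
    ultimately show ?thesis
      unfolding R_def W_def S_def using l H(1) by blast
  qed
  then have cover: "iso_class ` {G \<in> Mon (\<Union>l\<in>L. M l). nverts G = n} \<subseteq> R"
    by blast
  have "R \<subseteq> iso_class ` {G. wf_graph G \<and> nverts G = n}"
    unfolding R_def S_def subgraph_def using Y by blast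
  then have "finite R"
    using finite_iso_classes_nverts by (rule finite_subset)
  obtain l0 where "W \<subseteq> {l0}"
    using t_sparse_window_subset_singleton[OF assms(3)] unfolding W_def by blast
  then have "finite W"
    using finite_subset by blast
  have "unlabeled_count (Mon (\<Union>l\<in>L. M l)) n \<le> card R"
    unfolding unlabeled_count_def using card_mono[OF \<open>finite R\<close> cover] .
  also have "\<dots> \<le> unlabeled_count Y n + card (\<Union>l\<in>W. \<Union>G\<in>M l. S G)"
    unfolding R_def unlabeled_count_def by (rule card_Un_le)
  also have "card (\<Union>l\<in>W. \<Union>G\<in>M l. S G) \<le> (\<Sum>l\<in>W. card (\<Union>G\<in>M l. S G))"
    using \<open>finite W\<close> by (rule card_UN_le)
  also have "\<dots> \<le> (\<Sum>l\<in>W. \<Sum>G\<in>M l. card (S G))"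
    using M_finite unfolding W_def by (intro sum_mono card_UN_le) blast
  finally show ?thesis
    unfolding W_def S_def s_sub_def by simp
qed

lemma add_power_le_power_add:
  fixes a b :: real
  assumes "0 \<le> a" "0 \<le> b" "1 \<le> n"
  shows "a ^ n + b ^ n \<le> (a + b) ^ n"
  using assms(3)
proof (induction n rule: dec_induct)
  case base
  then show ?case by simp
next
  case (step m)
  have "a ^ Suc m + b ^ Suc m \<le> (a + b) * (a ^ m + b ^ m)"
    using assms(1,2) by (simp add: algebra_simps)
  also have "\<dots> \<le> (a + b) * (a + b) ^ m"
    using step.IH assms(1,2) by (intro mult_left_mono) auto
  finally show ?case
    by simp
qed

lemma powr_le_exp_mult_power:
  fixes \<gamma> a t0 :: real
  assumes "t0 \<le> a" "a \<le> real n"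
  shows "\<gamma> powr a \<le> exp (\<bar>ln \<gamma>\<bar> * \<bar>t0\<bar>) * exp \<bar>ln \<gamma>\<bar> ^ n"
proof -
  have "a * ln \<gamma> \<le> \<bar>a\<bar> * \<bar>ln \<gamma>\<bar>"
    by (metis abs_ge_self abs_mult)
  also have "\<dots> \<le> (\<bar>t0\<bar> + real n) * \<bar>ln \<gamma>\<bar>"
    using assms by (intro mult_right_mono) auto
  finally have "exp (a * ln \<gamma>) \<le> exp (\<bar>ln \<gamma>\<bar> * \<bar>t0\<bar> + real n * \<bar>ln \<gamma>\<bar>)"
    by (simp add: algebra_simps)
  also have "\<dots> = exp (\<bar>ln \<gamma>\<bar> * \<bar>t0\<bar>) * exp \<bar>ln \<gamma>\<bar> ^ n"
    by (simp add: exp_add exp_of_nat_mult)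
  finally show ?thesis
    by (simp add: powr_def)
qed

lemma sum_s_sub_window_le_power:
  assumes "1 \<le> n" and "mono t" and "t_sparse t L"
    and M: "\<forall>l\<in>L. \<forall>G\<in>M l. wf_graph G \<and> nverts G = l \<and> mono_tiny_graph c Y t G"
    and M_card: "\<forall>l\<in>L. finite (M l) \<and> real (card (M l)) \<le> \<gamma> powr t l"
  shows "(\<Sum>l\<in>{l \<in> L. t l < real n \<and> n \<le> l}. \<Sum>G\<in>M l. real (s_sub n G))
    \<le> (exp (\<bar>ln \<gamma>\<bar> * \<bar>t 0\<bar>) * exp \<bar>ln \<gamma>\<bar> * \<bar>c\<bar>) ^ n"
proof -
  define K where "K = exp (\<bar>ln \<gamma>\<bar> * \<bar>t 0\<bar>)"
  define D where "D = exp \<bar>ln \<gamma>\<bar>"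
  define W where "W = {l \<in> L. t l < real n \<and> n \<le> l}"
  obtain l0 where "W \<subseteq> {l0}"
    using t_sparse_window_subset_singleton[OF assms(3)] unfolding W_def by blast
  then have "card W \<le> 1"
    using card_mono[of "{l0}" W] by auto
  have card_M: "real (card (M l)) \<le> K * D ^ n" if "l \<in> W" for l
  proof -
    have "t 0 \<le> t l" "t l \<le> real n" "real (card (M l)) \<le> \<gamma> powr t l"
      using monoD[OF assms(2)] M_card that unfolding W_def by auto
    then show ?thesis
      unfolding K_def D_def using powr_le_exp_mult_power[of "t 0" "t l" n \<gamma>] by linarith
  qed
  have s_sub: "real (s_sub n G) \<le> \<bar>c\<bar> ^ n" if "l \<in> W" "G \<in> M l" for l G
  proof -
    have "real (s_sub n G) \<le> c ^ n"
      using M that unfolding W_def mono_tiny_graph_def by auto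
    then show ?thesis
      using abs_ge_self[of "c ^ n", unfolded power_abs] by linarith
  qed
  have "(\<Sum>l\<in>W. \<Sum>G\<in>M l. real (s_sub n G)) \<le> (\<Sum>l\<in>W. real (card (M l)) * \<bar>c\<bar> ^ n)"
    using s_sub by (intro sum_mono sum_bounded_above) auto
  also have "\<dots> \<le> (\<Sum>l\<in>W. K * D ^ n * \<bar>c\<bar> ^ n)"
    using card_M by (intro sum_mono mult_right_mono) auto
  also have "\<dots> \<le> K * D ^ n * \<bar>c\<bar> ^ n"
    using \<open>card W \<le> 1\<close> by (simp add: K_def D_def mult_left_le_one_le)
  also have "\<dots> \<le> (K * D * \<bar>c\<bar>) ^ n"
  proof -
    have "K \<le> K ^ n"
      using assms(1) power_increasing[of 1 n K] by (simp add: K_def)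
    then show ?thesis
      using mult_right_mono[of K "K ^ n" "D ^ n * \<bar>c\<bar> ^ n"]
      by (simp add: D_def power_mult_distrib mult.assoc)
  qed
  finally show ?thesis
    unfolding W_def K_def D_def .
qed

lemma unlabeled_count_Mon_le_power:
  assumes Y_count: "\<forall>n. real (unlabeled_count Y n) \<le> \<beta> ^ n" and Y: "\<forall>G\<in>Y. wf_graph G"
    and "mono t" and "t_sparse t L"
    and M: "\<forall>l\<in>L. \<forall>G\<in>M l. wf_graph G \<and> nverts G = l \<and> mono_tiny_graph c Y t G"
    and M_card: "\<forall>l\<in>L. finite (M l) \<and> real (card (M l)) \<le> \<gamma> powr t l"
  shows "real (unlabeled_count (Mon (\<Union>l\<in>L. M l)) n)
    \<le> (\<bar>\<beta>\<bar> + exp (\<bar>ln \<gamma>\<bar> * \<bar>t 0\<bar>) * exp \<bar>ln \<gamma>\<bar> * \<bar>c\<bar>) ^ n"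
    (is "_ \<le> (_ + ?a) ^ n")
proof (cases "n = 0")
  case True
  have "\<forall>G\<in>Mon (\<Union>l\<in>L. M l). wf_graph G"
    using M Mon_eq_subgraph_closure[of "\<Union>l\<in>L. M l"] unfolding subgraph_closure_def by auto
  then show ?thesis
    using unlabeled_count_zero_le_one True by simp
next
  case False
  let ?W = "{l \<in> L. t l < real n \<and> n \<le> l}"
  have n: "1 \<le> n" and M_finite: "\<forall>l\<in>L. finite (M l)"
    using False M_card by auto
  have "real (unlabeled_count (Mon (\<Union>l\<in>L. M l)) n)
      \<le> real (unlabeled_count Y n + (\<Sum>l\<in>?W. \<Sum>G\<in>M l. s_sub n G))"
    using unlabeled_count_Mon_le[OF n Y assms(4) M M_finite] unfolding of_nat_le_iff .
  also have "\<dots> = real (unlabeled_count Y n) + (\<Sum>l\<in>?W. \<Sum>G\<in>M l. real (s_sub n G))"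
    by simp
  also have "\<dots> \<le> \<bar>\<beta>\<bar> ^ n + ?a ^ n"
    using order_trans[OF spec[OF Y_count, of n] abs_ge_self[of "\<beta> ^ n", unfolded power_abs]]
      sum_s_sub_window_le_power[OF n assms(3,4) M M_card]
    by (rule add_mono)
  also have "\<dots> \<le> (\<bar>\<beta>\<bar> + ?a) ^ n"
    using n by (intro add_power_le_power_add) auto
  finally show ?thesis .
qed

theorem mainTheorem14:
  fixes c \<gamma> :: real and Y :: "graph set" and t :: "nat \<Rightarrow> real"
    and L :: "nat set" and M :: "nat \<Rightarrow> graph set"
  assumes "tiny_class Y"
    and "mono t" and "\<forall>B. \<exists>n. t n > B" and "\<forall>n. t n \<le> real n"
    and "infinite L" and "t_sparse t L"
    and "\<forall>l\<in>L. \<forall>G\<in>M l. wf_graph G \<and> nverts G = l \<and> mono_tiny_graph c Y t G"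
    and "\<forall>l\<in>L. finite (M l) \<and> real (card (M l)) \<le> \<gamma> powr t l"
  shows "monotone_class (Mon (\<Union>l\<in>L. M l)) \<and> tiny_class (Mon (\<Union>l\<in>L. M l))"
proof -
  have mon: "monotone_class (Mon (\<Union>l\<in>L. M l))"
    using assms(7) Mon_eq_subgraph_closure[of "\<Union>l\<in>L. M l"] monotone_class_subgraph_closure
    by auto
  obtain \<beta> where \<beta>: "\<forall>n. real (unlabeled_count Y n) \<le> \<beta> ^ n" and "hereditary_class Y"
    using assms(1) unfolding tiny_class_def by blast
  then have "\<forall>G\<in>Y. wf_graph G"
    unfolding hereditary_class_def is_class_def by blast
  then have "\<forall>n. real (unlabeled_count (Mon (\<Union>l\<in>L. M l)) n)
      \<le> (\<bar>\<beta>\<bar> + exp (\<bar>ln \<gamma>\<bar> * \<bar>t 0\<bar>) * exp \<bar>ln \<gamma>\<bar> * \<bar>c\<bar>) ^ n"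
    using unlabeled_count_Mon_le_power[OF \<beta> _ assms(2,6-8)] by blast
  then show ?thesis
    using mon monotone_class_imp_hereditary_class unfolding tiny_class_def by blast
qed

end
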